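(* Let $m\in\mathbb{N}$, let $\lambda_1<\dots<\lambda_m$ be real numbers and $\Lambda=\operatorname{diag}(\lambda_1,\dots,\lambda_m)$. Let $G$ be a tree with vertex set $[m]$. Let $g:E(G)\to\mathbb{N}$ be any function, let $N_0\in\mathbb{N}$ satisfy $N_0>\max\{g(e):e\in E(G)\}\cdot\operatorname{diam}(G)$, and define $f:E(G)\to\mathbb{N}$ by $f(e)=N_0+g(e)$. For $i,j\in V(G)$ let $P(i,j)$ be the (unique) path in $G$ from $i$ to $j$, and set $$c(i,j):=\prod_{k\in V(P(i,j))\setminus\{j\}}(\lambda_j-\lambda_k)^{-1},\qquad s(i,j):=\sum_{e\in E(P(i,j))}f(e),$$ so that $c(j,j)=1$, $s(j,j)=0$ and $c(i,j)\neq0$. Suppose $t_n>0$ with $t_n\to0$, and $A_n\in\mathcal M_{f,G}(t_n)\cap\mathcal E_\Lambda$ with $A_n\to\Lambda$ as $n\to\infty$. For each $n$ let $U_n=(u_n(i,j))$ be a real orthogonal matrix with nonnegative diagonal entries such that $U_n^\top A_nU_n=\Lambda$. Then for all $i,j\in V(G)$, $$\frac{u_n(i,j)}{t_n^{s(i,j)}}\to c(i,j)\quad\text{as }n\to\infty.$$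
   Context: For a simple graph $G$ on vertex set $[m]$, $S(G)$ is the set of real symmetric $m\times m$ matrices $A=(a(i,j))$ such that for $i\neq j$, $a(i,j)\neq0$ iff $\{i,j\}\in E(G)$; diagonal entries are unrestricted. For $f:E(G)\to\mathbb{N}$ and $t\in\mathbb{R}$, $\mathcal M_{f,G}(t):=\{A=(a(i,j))\in S(G): a(i,j)=t^{f(\{i,j\})}\text{ for }\{i,j\}\in E(G)\}$. $\mathcal E_\Lambda$ is the set of real symmetric $m\times m$ matrices with eigenvalues $\lambda_1,\dots,\lambda_m$. $\operatorname{diam}(G)$ is the diameter of $G$. *)

theory Defs
  imports Complex_Main "Jordan_Normal_Form.Char_Poly"
begin

(* Graphs on vertex set {0..<m}; edges are 2-element vertex sets. *)

definition simple_graph :: "nat \<Rightarrow> nat set set \<Rightarrow> bool" where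
  "simple_graph m E \<longleftrightarrow> (\<forall>e\<in>E. \<exists>i j. e = {i, j} \<and> i \<noteq> j \<and> i < m \<and> j < m)"

definition is_walk :: "nat set set \<Rightarrow> nat list \<Rightarrow> nat \<Rightarrow> nat \<Rightarrow> bool" where
  "is_walk E p i j \<longleftrightarrow> p \<noteq> [] \<and> hd p = i \<and> last p = j \<and>
     (\<forall>k. Suc k < length p \<longrightarrow> {p ! k, p ! Suc k} \<in> E)"

definition is_path :: "nat set set \<Rightarrow> nat list \<Rightarrow> nat \<Rightarrow> nat \<Rightarrow> bool" where
  "is_path E p i j \<longleftrightarrow> is_walk E p i j \<and> distinct p"

definition is_cycle :: "nat set set \<Rightarrow> nat list \<Rightarrow> bool" where
  "is_cycle E p \<longleftrightarrow> length p \<ge> 3 \<and> distinct p \<and>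
     (\<forall>k. Suc k < length p \<longrightarrow> {p ! k, p ! Suc k} \<in> E) \<and> {last p, hd p} \<in> E"

definition connected_graph :: "nat \<Rightarrow> nat set set \<Rightarrow> bool" where
  "connected_graph m E \<longleftrightarrow> (\<forall>i<m. \<forall>j<m. \<exists>p. is_walk E p i j)"

definition is_tree :: "nat \<Rightarrow> nat set set \<Rightarrow> bool" where
  "is_tree m E \<longleftrightarrow> simple_graph m E \<and> connected_graph m E \<and> (\<nexists>p. is_cycle E p)"

(* graph distance = number of edges of a shortest walk *)
definition graph_dist :: "nat set set \<Rightarrow> nat \<Rightarrow> nat \<Rightarrow> nat" where
  "graph_dist E i j = (LEAST n. \<exists>p. is_walk E p i j \<and> length p = Suc n)"

definition diam :: "nat \<Rightarrow> nat set set \<Rightarrow> nat" where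
  "diam m E = Max {graph_dist E i j | i j. i < m \<and> j < m}"

definition tree_path :: "nat set set \<Rightarrow> nat \<Rightarrow> nat \<Rightarrow> nat list" where
  "tree_path E i j = (THE p. is_path E p i j)"

definition path_edges :: "nat list \<Rightarrow> nat set set" where
  "path_edges p = {{p ! k, p ! Suc k} | k. Suc k < length p}"

definition in_S :: "nat \<Rightarrow> nat set set \<Rightarrow> real mat \<Rightarrow> bool" where
  "in_S m E A \<longleftrightarrow> A \<in> carrier_mat m m \<and> transpose_mat A = A \<and>
     (\<forall>i<m. \<forall>j<m. i \<noteq> j \<longrightarrow> (A $$ (i, j) \<noteq> 0 \<longleftrightarrow> {i, j} \<in> E))"

definition in_M :: "nat \<Rightarrow> nat set set \<Rightarrow> (nat set \<Rightarrow> nat) \<Rightarrow> real \<Rightarrow> real mat \<Rightarrow> bool" where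
  "in_M m E f t A \<longleftrightarrow> in_S m E A \<and>
     (\<forall>i<m. \<forall>j<m. {i, j} \<in> E \<longrightarrow> A $$ (i, j) = t ^ f {i, j})"

(* E_Lambda: real symmetric m x m matrices with eigenvalues lam_0, ..., lam_(m-1) (with multiplicity) *)
definition in_E :: "nat \<Rightarrow> (nat \<Rightarrow> real) \<Rightarrow> real mat \<Rightarrow> bool" where
  "in_E m lam A \<longleftrightarrow> A \<in> carrier_mat m m \<and> transpose_mat A = A \<and>
     char_poly A = (\<Prod>i<m. [:- lam i, 1:])"

definition diag_Lambda :: "nat \<Rightarrow> (nat \<Rightarrow> real) \<Rightarrow> real mat" where
  "diag_Lambda m lam = mat m m (\<lambda>(i, j). if i = j then lam i else 0)"

end

theory Submission
  imports Defs "HOL-Library.Landau_Symbols"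
begin

text \<open>Row \<open>k\<close> of the eigen-equation \<open>A U = U \<Lambda>\<close> in column \<open>j\<close> reads
  \<open>(\<lambda>j - a(k,k)) u(k,j) = \<Sum>l~k. t^f(k,l) u(l,j)\<close>, and \<open>\<lambda>j - a(k,k)\<close> stays away from \<open>0\<close>
  for \<open>k \<noteq> j\<close> because the diagonal of \<open>A\<close> tends to the distinct eigenvalues.
  Iterating this along the tree gives \<open>u(k,j) = O(t^(N0 d(k,j)))\<close>, \<open>d\<close> the tree distance, so
  \<open>U\<close> tends to the identity. Then, by induction on \<open>d(i,j)\<close>, only the neighbour of \<open>i\<close>
  towards \<open>j\<close> matters: all other neighbours contribute \<open>O(t^(N0 (d(i,j)+1)))\<close>, which is
  \<open>o(t^s(i,j))\<close> because \<open>N0\<close> exceeds the total excess of \<open>g\<close> along any path. Hence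
  \<open>u(i,j)/t^s(i,j)\<close> behaves like \<open>(u(k,j)/t^s(k,j))/(\<lambda>j - \<lambda>i)\<close>, which unfolds to \<open>c(i,j)\<close>.\<close>

section \<open>Paths in trees\<close>

lemma tree_edgeD:
  assumes "is_tree m E" "{k, l} \<in> E"
  shows "k < m" "l < m" "k \<noteq> l"
  using assms unfolding is_tree_def simple_graph_def by (auto simp: doubleton_eq_iff)

lemma finite_tree_edges:
  assumes "is_tree m E"
  shows "finite E"
proof -
  have "E \<subseteq> (\<lambda>(i, j). {i, j}) ` ({..<m} \<times> {..<m})"
    using assms unfolding is_tree_def simple_graph_def by fastforce
  then show ?thesis
    by (rule finite_subset) simp
qed

lemma is_walk_ConsD:
  assumes "is_walk E (x # w) i j" "w \<noteq> []"
  shows "x = i" "{x, hd w} \<in> E" "is_walk E w (hd w) j"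
proof -
  show "x = i"
    using assms unfolding is_walk_def by auto
  have "{(x # w) ! 0, (x # w) ! Suc 0} \<in> E"
    using assms unfolding is_walk_def by (metis length_Cons length_greater_0_conv less_Suc_eq_0_disj)
  then show "{x, hd w} \<in> E"
    using assms(2) by (simp add: hd_conv_nth)
  show "is_walk E w (hd w) j"
    unfolding is_walk_def
  proof (intro conjI allI impI)
    fix k
    assume "Suc k < length w"
    then have "{(x # w) ! Suc k, (x # w) ! Suc (Suc k)} \<in> E"
      using assms(1) unfolding is_walk_def by (metis Suc_less_eq length_Cons)
    then show "{w ! k, w ! Suc k} \<in> E"
      by simp
  qed (use assms in \<open>auto simp: is_walk_def\<close>)
qed

lemma is_path_drop:
  assumes "is_path E p i j" "k < length p"
  shows "is_path E (drop k p) (p ! k) j"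
  using assms unfolding is_path_def is_walk_def by (auto simp: hd_drop_conv_nth)

lemma is_path_Cons:
  assumes "is_path E p y j" "{x, y} \<in> E" "x \<notin> set p"
  shows "is_path E (x # p) x j"
  using assms unfolding is_path_def is_walk_def
  by (auto simp: nth_Cons split: nat.splits) (metis hd_conv_nth less_Suc_eq_0_disj)

lemma is_path_self:
  assumes "is_path E p i i"
  shows "p = [i]"
proof (cases p)
  case Nil
  then show ?thesis
    using assms by (simp add: is_path_def is_walk_def)
next
  case (Cons x xs)
  have "xs = []"
  proof (rule ccontr)
    assume "xs \<noteq> []"
    then have "last xs \<in> set xs" "last xs = x"
      using assms Cons by (auto simp: is_path_def is_walk_def)
    then show False
      using assms Cons by (simp add: is_path_def)
  qed
  then show ?thesis
    using assms Cons by (simp add: is_path_def is_walk_def)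
qed

lemma walk_imp_shorter_path:
  "is_walk E w i j \<Longrightarrow> \<exists>p. is_path E p i j \<and> length p \<le> length w"
proof (induction w arbitrary: i)
  case Nil
  then show ?case
    by (simp add: is_walk_def)
next
  case (Cons x w)
  show ?case
  proof (cases "w = []")
    case True
    then show ?thesis
      using Cons.prems by (auto simp: is_path_def is_walk_def)
  next
    case False
    note step = is_walk_ConsD[OF Cons.prems False]
    obtain p where p: "is_path E p (hd w) j" "length p \<le> length w"
      using Cons.IH[OF step(3)] by blast
    show ?thesis
    proof (cases "x \<in> set p")
      case True
      then obtain k where "k < length p" "p ! k = x"
        by (meson in_set_conv_nth)
      with is_path_drop[OF p(1)] step(1) p(2) show ?thesis
        by (intro exI[of _ "drop k p"]) auto
    next
      case False
      with is_path_Cons[OF p(1) step(2)] step(1) p(2) show ?thesis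
        by (intro exI[of _ "x # p"]) auto
    qed
  qed
qed

text \<open>If \<open>k\<close> lay further along \<open>p\<close>, the segment of \<open>p\<close> from \<open>i\<close> to \<open>k\<close> and the edge \<open>{i, k}\<close>
  would form a cycle.\<close>

lemma tree_neighbour_on_path:
  assumes tree: "is_tree m E" and p: "is_path E p i j" and e: "{i, k} \<in> E" and k: "k \<in> set p"
  shows "k = p ! 1"
proof (rule ccontr)
  assume ne: "k \<noteq> p ! 1"
  obtain r where r: "r < length p" "p ! r = k"
    using k by (meson in_set_conv_nth)
  have "p ! 0 = i"
    using p unfolding is_path_def is_walk_def by (metis hd_conv_nth)
  then have "r \<noteq> 0"
    using r tree_edgeD(3)[OF tree e] by metis
  moreover have "r \<noteq> 1"
    using r ne by auto
  ultimately have r2: "2 \<le> r"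
    by linarith
  define c where "c = take (Suc r) p"
  have "is_cycle E c"
    unfolding is_cycle_def
  proof (intro conjI allI impI)
    show "3 \<le> length c" "distinct c"
      using p r r2 by (auto simp: c_def is_path_def)
    fix q
    assume "Suc q < length c"
    then show "{c ! q, c ! Suc q} \<in> E"
      using p r unfolding c_def is_path_def is_walk_def by auto
  next
    have "last c = k"
      using r unfolding c_def
      by (subst last_conv_nth) (auto simp: min_def intro: arg_cong[where f = "(!) p"])
    moreover have "hd c = i"
      using p r unfolding c_def is_path_def is_walk_def by simp
    ultimately show "{last c, hd c} \<in> E"
      using e by (simp add: insert_commute)
  qed
  with tree show False
    unfolding is_tree_def by blast
qed

lemma is_path_tree_unique:
  assumes tree: "is_tree m E"
  shows "is_path E q i j \<Longrightarrow> is_path E p i j \<Longrightarrow> p = q"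
proof (induction q arbitrary: i p)
  case Nil
  then show ?case
    by (simp add: is_path_def is_walk_def)
next
  case (Cons y q)
  show ?case
  proof (cases "i = j")
    case True
    then show ?thesis
      using is_path_self Cons.prems by metis
  next
    case False
    have "q \<noteq> []"
      using Cons.prems False by (auto simp: is_path_def is_walk_def)
    obtain x p' where p: "p = x # p'"
      using Cons.prems by (cases p) (auto simp: is_path_def is_walk_def)
    have "p' \<noteq> []"
      using Cons.prems False p by (auto simp: is_path_def is_walk_def)
    have wq: "y = i" "{y, hd q} \<in> E" "is_walk E q (hd q) j"
      using is_walk_ConsD[of E y q i j] Cons.prems \<open>q \<noteq> []\<close> by (auto simp: is_path_def)
    have wp: "x = i" "is_walk E p' (hd p') j"
      using is_walk_ConsD[of E x p' i j] Cons.prems p \<open>p' \<noteq> []\<close> by (auto simp: is_path_def)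
    have pq: "is_path E q (hd q) j" and pp: "is_path E p' (hd p') j"
      using wq wp Cons.prems p by (auto simp: is_path_def)
    show ?thesis
    proof (cases "hd q \<in> set p")
      case True
      then have "hd q = hd p'"
        using tree_neighbour_on_path[OF tree Cons.prems(2)] wq p \<open>p' \<noteq> []\<close> by (simp add: hd_conv_nth)
      then show ?thesis
        using Cons.IH[OF pq] pp p wq wp by simp
    next
      case False
      have "{hd q, i} \<in> E"
        using wq by (simp add: insert_commute)
      from Cons.IH[OF pq is_path_Cons[OF Cons.prems(2) this False]] have "i \<in> set q"
        using p wp by (metis list.set_intros)
      then show ?thesis
        using Cons.prems wq by (simp add: is_path_def)
    qed
  qed
qed

lemma tree_path_eqI:
  assumes "is_tree m E" "is_path E p i j"
  shows "tree_path E i j = p"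
  unfolding tree_path_def using is_path_tree_unique[OF assms(1)] assms(2) by blast

lemma is_path_tree_path:
  assumes tree: "is_tree m E" and "i < m" "j < m"
  shows "is_path E (tree_path E i j) i j"
proof -
  obtain w where "is_walk E w i j"
    using assms unfolding is_tree_def connected_graph_def by blast
  then obtain p where "is_path E p i j"
    using walk_imp_shorter_path by blast
  with tree_path_eqI[OF tree this] show ?thesis
    by simp
qed

lemma tree_path_self:
  assumes "is_tree m E" "j < m"
  shows "tree_path E j j = [j]"
  using is_path_tree_path[OF assms(1,2,2)] by (rule is_path_self)

lemma tree_path_ends:
  assumes "is_tree m E" "i < m" "j < m"
  shows "tree_path E i j \<noteq> []" "hd (tree_path E i j) = i" "last (tree_path E i j) = j"
  using is_path_tree_path[OF assms] by (auto simp: is_path_def is_walk_def)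

lemma tree_path_Cons:
  assumes tree: "is_tree m E" and "i < m" "j < m" "i \<noteq> j"
  obtains k where "tree_path E i j = i # tree_path E k j" "{i, k} \<in> E"
proof -
  let ?p = "tree_path E i j"
  have p: "is_path E ?p i j"
    using is_path_tree_path[OF assms(1-3)] .
  then obtain q where q: "?p = i # q"
    by (cases ?p) (auto simp: is_path_def is_walk_def)
  then have "q \<noteq> []"
    using p assms(4) by (auto simp: is_path_def is_walk_def)
  then have "{i, hd q} \<in> E" "is_path E q (hd q) j"
    using is_walk_ConsD[of E i q i j] p q by (auto simp: is_path_def)
  then show ?thesis
    using q tree_path_eqI[OF tree] by (intro that[of "hd q"]) simp_all
qed

lemma tree_path_neighbour_on:
  assumes tree: "is_tree m E" and "k < m" "j < m" "{k, l} \<in> E" "l \<in> set (tree_path E k j)"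
  shows "tree_path E k j = k # tree_path E l j"
proof -
  have "k \<noteq> j"
  proof
    assume "k = j"
    then have "l = k"
      using assms(5) tree_path_self[OF tree assms(3)] by simp
    then show False
      using tree_edgeD(3)[OF tree assms(4)] by simp
  qed
  then obtain k' where k': "tree_path E k j = k # tree_path E k' j" "{k, k'} \<in> E"
    using tree_path_Cons[OF assms(1-3)] by blast
  have "l = tree_path E k j ! 1"
    using tree_neighbour_on_path[OF tree is_path_tree_path[OF assms(1-3)] assms(4,5)] .
  also have "\<dots> = k'"
    using k' is_path_tree_path[OF tree tree_edgeD(2)[OF tree k'(2)] assms(3)]
    by (cases "tree_path E k' j") (auto simp: is_path_def is_walk_def)
  finally show ?thesis
    using k' by simp
qed

lemma tree_path_neighbour_off:
  assumes tree: "is_tree m E" and "k < m" "j < m" "{k, l} \<in> E" "l \<notin> set (tree_path E k j)"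
  shows "tree_path E l j = l # tree_path E k j"
  using is_path_Cons[OF is_path_tree_path[OF assms(1-3)] _ assms(5)] assms(4)
  by (intro tree_path_eqI[OF tree]) (simp add: insert_commute)

lemma length_tree_path_le_diam:
  assumes tree: "is_tree m E" and "i < m" "j < m"
  shows "length (tree_path E i j) \<le> Suc (diam m E)"
proof -
  obtain w where "is_walk E w i j"
    using assms unfolding is_tree_def connected_graph_def by blast
  then have "\<exists>n p. is_walk E p i j \<and> length p = Suc n"
    by (intro exI[of _ "length w - 1"] exI[of _ w]) (simp add: is_walk_def)
  from LeastI_ex[OF this] obtain w where w: "is_walk E w i j" "length w = Suc (graph_dist E i j)"
    unfolding graph_dist_def by blast
  obtain p where "is_path E p i j" "length p \<le> length w"
    using walk_imp_shorter_path[OF w(1)] by blast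
  then have "length (tree_path E i j) \<le> Suc (graph_dist E i j)"
    using tree_path_eqI[OF tree] w(2) by simp
  moreover have "{graph_dist E i j | i j. i < m \<and> j < m} = (\<lambda>(i, j). graph_dist E i j) ` ({..<m} \<times> {..<m})"
    by auto
  then have "finite {graph_dist E i j | i j. i < m \<and> j < m}"
    by simp
  then have "graph_dist E i j \<le> diam m E"
    unfolding diam_def by (rule Max_ge) (use assms in blast)
  ultimately show ?thesis
    by simp
qed

lemma path_edges_Cons:
  assumes "p \<noteq> []"
  shows "path_edges (x # p) = insert {x, hd p} (path_edges p)"
proof -
  have "path_edges (x # p) = {{(x # p) ! k, (x # p) ! Suc k} | k. Suc k < length (x # p)}"
    by (simp add: path_edges_def)
  also have "\<dots> = insert {x, hd p} {{p ! k, p ! Suc k} | k. Suc k < length p}"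
  proof (intro equalityI subsetI)
    fix e
    assume "e \<in> {{(x # p) ! k, (x # p) ! Suc k} | k. Suc k < length (x # p)}"
    then obtain k where k: "e = {(x # p) ! k, (x # p) ! Suc k}" "Suc k < length (x # p)"
      by blast
    show "e \<in> insert {x, hd p} {{p ! k, p ! Suc k} | k. Suc k < length p}"
    proof (cases k)
      case 0
      then show ?thesis
        using k assms by (simp add: hd_conv_nth)
    next
      case (Suc k')
      then show ?thesis
        using k by auto
    qed
  next
    fix e
    assume "e \<in> insert {x, hd p} {{p ! k, p ! Suc k} | k. Suc k < length p}"
    then show "e \<in> {{(x # p) ! k, (x # p) ! Suc k} | k. Suc k < length (x # p)}"
    proof
      assume "e = {x, hd p}"
      then have "e = {(x # p) ! 0, (x # p) ! Suc 0}" "Suc 0 < length (x # p)"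
        using assms by (auto simp: hd_conv_nth)
      then show ?thesis
        by blast
    next
      assume "e \<in> {{p ! k, p ! Suc k} | k. Suc k < length p}"
      then obtain k where "e = {p ! k, p ! Suc k}" "Suc k < length p"
        by blast
      then have "e = {(x # p) ! Suc k, (x # p) ! Suc (Suc k)}" "Suc (Suc k) < length (x # p)"
        by auto
      then show ?thesis
        by blast
    qed
  qed
  finally show ?thesis
    by (simp add: path_edges_def)
qed

lemma path_edges_eq_image: "path_edges p = (\<lambda>k. {p ! k, p ! Suc k}) ` {..<length p - 1}"
proof -
  have "path_edges p = (\<lambda>k. {p ! k, p ! Suc k}) ` {k. Suc k < length p}"
    by (auto simp: path_edges_def)
  also have "{k. Suc k < length p} = {..<length p - 1}"
    by auto
  finally show ?thesis .
qed

lemma finite_path_edges: "finite (path_edges p)"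
  by (simp add: path_edges_eq_image)

lemma card_path_edges_le: "card (path_edges p) \<le> length p - 1"
  unfolding path_edges_eq_image by (metis card_image_le card_lessThan finite_lessThan)

lemma path_edges_subset: "is_walk E p i j \<Longrightarrow> path_edges p \<subseteq> E"
  by (auto simp: path_edges_def is_walk_def)

lemma doubleton_notin_path_edges: "x \<notin> set p \<Longrightarrow> {x, y} \<notin> path_edges p"
  by (auto simp: path_edges_def doubleton_eq_iff)

text \<open>This is where the choice of \<open>N0\<close> enters: the excess \<open>g\<close> accumulated along a path
  of at most \<open>diam m E\<close> edges stays below one extra \<open>N0\<close>.\<close>

lemma tree_path_weight_less:
  assumes tree: "is_tree m E" and N0: "N0 > Max (g ` E) * diam m E"
    and f: "\<And>e. e \<in> E \<Longrightarrow> f e = N0 + g e" and "i < m" "j < m"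
  shows "(\<Sum>e\<in>path_edges (tree_path E i j). f e) < N0 * length (tree_path E i j)"
proof -
  let ?p = "tree_path E i j" and ?G = "Max (g ` E)"
  have sub: "path_edges ?p \<subseteq> E"
    using is_path_tree_path[OF assms(1,4,5)] path_edges_subset unfolding is_path_def by blast
  have "(\<Sum>e\<in>path_edges ?p. f e) \<le> (\<Sum>e\<in>path_edges ?p. N0 + ?G)"
  proof (rule sum_mono)
    fix e
    assume "e \<in> path_edges ?p"
    with sub have "e \<in> E"
      by blast
    then show "f e \<le> N0 + ?G"
      using f finite_tree_edges[OF tree] by simp
  qed
  also have "\<dots> \<le> (length ?p - 1) * (N0 + ?G)"
    using card_path_edges_le by (simp add: mult_right_mono)
  also have "\<dots> = N0 * (length ?p - 1) + ?G * (length ?p - 1)"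
    by (metis distrib_left mult.commute)
  also have "\<dots> < N0 * (length ?p - 1) + N0"
  proof -
    have "length ?p - 1 \<le> diam m E"
      using length_tree_path_le_diam[OF assms(1,4,5)] by simp
    then have "?G * (length ?p - 1) \<le> ?G * diam m E"
      by (rule mult_le_mono2)
    then show ?thesis
      using N0 by linarith
  qed
  also have "\<dots> = N0 * length ?p"
    using is_path_tree_path[OF assms(1,4,5)]
    by (cases ?p) (auto simp: is_path_def is_walk_def)
  finally show ?thesis .
qed

section \<open>Orthogonal diagonalisation and power bounds\<close>

lemma mult_eq_if_orthogonally_similar:
  fixes A U D :: "'a::field mat"
  assumes A: "A \<in> carrier_mat m m" and U: "U \<in> carrier_mat m m"
    and orth: "transpose_mat U * U = 1\<^sub>m m" and D: "transpose_mat U * A * U = D"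
  shows "A * U = U * D"
proof -
  have Ut: "transpose_mat U \<in> carrier_mat m m"
    using U by simp
  have "U * transpose_mat U = 1\<^sub>m m"
    by (rule mat_mult_left_right_inverse[OF Ut U orth])
  then have "A * U = (U * transpose_mat U) * A * U"
    using A U by simp
  also have "\<dots> = U * (transpose_mat U * A * U)"
    using A U Ut by (simp add: assoc_mult_mat[of _ m m _ m _ m])
  finally show ?thesis
    using D by simp
qed

lemma mult_diag_Lambda_index:
  assumes "U \<in> carrier_mat m m" "k < m" "j < m"
  shows "(U * diag_Lambda m lam) $$ (k, j) = lam j * U $$ (k, j)"
proof -
  have "(U * diag_Lambda m lam) $$ (k, j) = (\<Sum>l\<in>{0..<m}. U $$ (k, l) * (if l = j then lam l else 0))"
    using assms by (simp add: scalar_prod_def diag_Lambda_def)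
  also have "\<dots> = (\<Sum>l\<in>{0..<m}. if l = j then U $$ (k, l) * lam l else 0)"
    by (rule sum.cong) auto
  finally show ?thesis
    using assms by simp
qed

lemma orthogonal_column_sum_squares:
  fixes U :: "real mat"
  assumes "U \<in> carrier_mat m m" "transpose_mat U * U = 1\<^sub>m m" "j < m"
  shows "(\<Sum>k<m. (U $$ (k, j))\<^sup>2) = 1"
proof -
  have "(\<Sum>k<m. (U $$ (k, j))\<^sup>2) = (transpose_mat U * U) $$ (j, j)"
    using assms(1,3) by (simp add: scalar_prod_def lessThan_atLeast0 power2_eq_square)
  also have "\<dots> = 1"
    using assms by simp
  finally show ?thesis .
qed

lemma orthogonal_entry_abs_le_1:
  fixes U :: "real mat"
  assumes "U \<in> carrier_mat m m" "transpose_mat U * U = 1\<^sub>m m" "k < m" "j < m"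
  shows "\<bar>U $$ (k, j)\<bar> \<le> 1"
proof -
  have "(U $$ (k, j))\<^sup>2 \<le> (\<Sum>k<m. (U $$ (k, j))\<^sup>2)"
    by (rule member_le_sum) (use assms in auto)
  then show ?thesis
    using orthogonal_column_sum_squares[OF assms(1,2,4)] by (simp add: abs_square_le_1)
qed

lemma bigo_power_antimono:
  fixes t :: "'a \<Rightarrow> real"
  assumes "eventually (\<lambda>x. \<bar>t x\<bar> \<le> 1) F" "a \<le> b"
  shows "(\<lambda>x. t x ^ b) \<in> O[F](\<lambda>x. t x ^ a)"
  using assms(1)
  by (intro bigoI[of _ 1]) (auto elim!: eventually_mono simp: power_abs intro: power_decreasing[OF assms(2)])

lemma bigo_power_Suc_divide_tendsto_0:
  fixes t h :: "'a \<Rightarrow> real"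
  assumes t: "(t \<longlongrightarrow> 0) F" "eventually (\<lambda>x. t x \<noteq> 0) F"
    and h: "h \<in> O[F](\<lambda>x. t x ^ Suc w)"
  shows "((\<lambda>x. h x / t x ^ w) \<longlongrightarrow> 0) F"
proof -
  obtain c where "eventually (\<lambda>x. norm (h x) \<le> c * norm (t x ^ Suc w)) F"
    using h by (elim landau_o.bigE)
  with t(2) have "eventually (\<lambda>x. norm (h x / t x ^ w) \<le> norm (t x) * c) F"
    by eventually_elim (simp add: norm_divide divide_le_eq abs_mult field_simps)
  with t(1) show ?thesis
    by (rule tendsto_0_le)
qed

section \<open>Asymptotics of the eigenvectors\<close>

definition neighbours :: "nat set set \<Rightarrow> nat \<Rightarrow> nat set" where
  "neighbours E k = {l. {k, l} \<in> E}"

lemma neighbours_subset: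
  assumes "is_tree m E"
  shows "neighbours E k \<subseteq> {..<m} - {k}"
proof
  fix l
  assume "l \<in> neighbours E k"
  then show "l \<in> {..<m} - {k}"
    using tree_edgeD[OF assms, of k l] by (simp add: neighbours_def)
qed

locale tree_eigenvector_asymptotics =
  fixes m :: nat and lam :: "nat \<Rightarrow> real" and E :: "nat set set" and f :: "nat set \<Rightarrow> nat"
    and N0 :: nat and t :: "nat \<Rightarrow> real" and A U :: "nat \<Rightarrow> real mat"
  assumes tree: "is_tree m E"
    and lam_inj: "\<And>i j. i < m \<Longrightarrow> j < m \<Longrightarrow> i \<noteq> j \<Longrightarrow> lam i \<noteq> lam j"
    and f_ge: "\<And>e. e \<in> E \<Longrightarrow> N0 \<le> f e"
    and weight_less: "\<And>i j. i < m \<Longrightarrow> j < m \<Longrightarrow>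
      (\<Sum>e\<in>path_edges (tree_path E i j). f e) < N0 * length (tree_path E i j)"
    and t_pos: "\<And>n. t n > 0"
    and t_lim: "t \<longlonglongrightarrow> 0"
    and A_M: "\<And>n. in_M m E f (t n) (A n)"
    and A_diag_lim: "\<And>k. k < m \<Longrightarrow> (\<lambda>n. A n $$ (k, k)) \<longlonglongrightarrow> lam k"
    and U_carrier: "\<And>n. U n \<in> carrier_mat m m"
    and U_orth: "\<And>n. transpose_mat (U n) * U n = 1\<^sub>m m"
    and U_diag: "\<And>n i. i < m \<Longrightarrow> U n $$ (i, i) \<ge> 0"
    and U_diagonalizes: "\<And>n. transpose_mat (U n) * A n * U n = diag_Lambda m lam"
begin

definition depth :: "nat \<Rightarrow> nat \<Rightarrow> nat" where
  "depth i j = length (tree_path E i j) - 1"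

definition weight :: "nat \<Rightarrow> nat \<Rightarrow> nat" where
  "weight i j = (\<Sum>e\<in>path_edges (tree_path E i j). f e)"

definition coeff :: "nat \<Rightarrow> nat \<Rightarrow> real" where
  "coeff i j = (\<Prod>k\<in>set (tree_path E i j) - {j}. inverse (lam j - lam k))"

lemma depth_eq_0_iff:
  assumes "i < m" "j < m"
  shows "depth i j = 0 \<longleftrightarrow> i = j"
proof
  assume "depth i j = 0"
  then show "i = j"
    using is_path_tree_path[OF tree assms] unfolding depth_def
    by (cases "tree_path E i j") (auto simp: is_path_def is_walk_def)
qed (simp add: depth_def tree_path_self[OF tree assms(2)])

lemma depth_le_diam:
  assumes "i < m" "j < m"
  shows "depth i j \<le> diam m E"
  using length_tree_path_le_diam[OF tree assms] by (simp add: depth_def)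

lemma weight_less_depth:
  assumes "i < m" "j < m"
  shows "weight i j < N0 * Suc (depth i j)"
  using weight_less[OF assms] tree_path_ends(1)[OF tree assms] by (simp add: weight_def depth_def)

lemma N0_pos:
  assumes "j < m"
  shows "0 < N0"
  using weight_less_depth[OF assms assms] depth_eq_0_iff[OF assms assms] by simp

context
  fixes i j k
  assumes ijk: "i < m" "j < m" "k < m" and path: "tree_path E i j = i # tree_path E k j"
begin

lemma depth_Cons: "depth i j = Suc (depth k j)"
  using path tree_path_ends(1)[OF tree ijk(3,2)] by (simp add: depth_def)

lemma not_in_tree_path_Cons: "i \<notin> set (tree_path E k j)"
  using is_path_tree_path[OF tree ijk(1,2)] path by (simp add: is_path_def)

lemma weight_Cons: "weight i j = f {i, k} + weight k j"
proof -
  have "path_edges (tree_path E i j) = insert {i, k} (path_edges (tree_path E k j))"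
    using path path_edges_Cons tree_path_ends(1,2)[OF tree ijk(3,2)] by simp
  then show ?thesis
    using doubleton_notin_path_edges[OF not_in_tree_path_Cons] finite_path_edges
    by (simp add: weight_def)
qed

lemma coeff_Cons: "coeff i j = inverse (lam j - lam i) * coeff k j"
proof -
  have "i \<noteq> j"
    using not_in_tree_path_Cons tree_path_ends(1,3)[OF tree ijk(3,2)] by (metis last_in_set)
  then have "set (tree_path E i j) - {j} = insert i (set (tree_path E k j) - {j})"
    using path by auto
  then show ?thesis
    using not_in_tree_path_Cons by (simp add: coeff_def)
qed

end

lemma depth_neighbour_le:
  assumes "k < m" "j < m" "{k, l} \<in> E"
  shows "depth k j \<le> Suc (depth l j)"
proof (cases "l \<in> set (tree_path E k j)")
  case True
  then show ?thesis
    using depth_Cons tree_path_neighbour_on[OF tree assms True] tree_edgeD[OF tree assms(3)] assms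
    by simp
next
  case False
  then show ?thesis
    using depth_Cons tree_path_neighbour_off[OF tree assms False] tree_edgeD[OF tree assms(3)] assms
    by simp
qed

lemma tree_path_other_neighbour:
  assumes "i < m" "j < m" "k < m" "tree_path E i j = i # tree_path E k j"
    and l: "l \<in> neighbours E i" "l \<noteq> k"
  shows "tree_path E l j = l # tree_path E i j"
proof (rule tree_path_neighbour_off[OF tree assms(1,2)])
  show "{i, l} \<in> E"
    using l by (simp add: neighbours_def)
  show "l \<notin> set (tree_path E i j)"
  proof
    assume "l \<in> set (tree_path E i j)"
    then have "tree_path E l j = tree_path E k j"
      using tree_path_neighbour_on[OF tree assms(1,2) \<open>{i, l} \<in> E\<close>] assms(4) by simp
    then show False
      using tree_path_ends(2)[OF tree tree_edgeD(2)[OF tree \<open>{i, l} \<in> E\<close>] assms(2)]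
        tree_path_ends(2)[OF tree assms(3,2)] l(2) by simp
  qed
qed

lemma A_offdiag:
  assumes "k < m" "l < m" "k \<noteq> l"
  shows "A n $$ (k, l) = (if {k, l} \<in> E then t n ^ f {k, l} else 0)"
  using A_M[of n] assms unfolding in_M_def in_S_def by auto

lemma eigen_recursion:
  assumes k: "k < m" and j: "j < m"
  shows "(lam j - A n $$ (k, k)) * U n $$ (k, j) =
    (\<Sum>l\<in>neighbours E k. t n ^ f {k, l} * U n $$ (l, j))"
proof -
  have A: "A n \<in> carrier_mat m m"
    using A_M[of n] by (simp add: in_M_def in_S_def)
  have "lam j * U n $$ (k, j) = (A n * U n) $$ (k, j)"
    using mult_eq_if_orthogonally_similar[OF A U_carrier U_orth U_diagonalizes]
      mult_diag_Lambda_index[OF U_carrier k j] by simp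
  also have "\<dots> = (\<Sum>l<m. A n $$ (k, l) * U n $$ (l, j))"
    using A U_carrier[of n] k j by (simp add: scalar_prod_def lessThan_atLeast0)
  also have "\<dots> = A n $$ (k, k) * U n $$ (k, j) + (\<Sum>l\<in>{..<m} - {k}. A n $$ (k, l) * U n $$ (l, j))"
    using k by (simp add: sum.remove)
  also have "(\<Sum>l\<in>{..<m} - {k}. A n $$ (k, l) * U n $$ (l, j)) =
      (\<Sum>l\<in>neighbours E k. t n ^ f {k, l} * U n $$ (l, j))"
  proof (rule sum.mono_neutral_cong_right)
    show "neighbours E k \<subseteq> {..<m} - {k}"
      by (rule neighbours_subset[OF tree])
    show "\<forall>l\<in>{..<m} - {k} - neighbours E k. A n $$ (k, l) * U n $$ (l, j) = 0"
      using k by (simp add: A_offdiag neighbours_def)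
    show "A n $$ (k, l) * U n $$ (l, j) = t n ^ f {k, l} * U n $$ (l, j)" if "l \<in> neighbours E k" for l
      using that k tree_edgeD[OF tree, of k l] by (simp add: A_offdiag neighbours_def)
  qed simp
  finally show ?thesis
    by (simp add: algebra_simps)
qed

lemma eventually_abs_t_le_1: "eventually (\<lambda>n. \<bar>t n\<bar> \<le> 1) sequentially"
proof -
  have "eventually (\<lambda>n. t n < 1) sequentially"
    using t_lim by (rule order_tendstoD) simp
  then show ?thesis
    by eventually_elim (simp add: abs_of_pos t_pos)
qed

lemma eventually_diag_gap_nonzero:
  assumes "k < m" "j < m" "k \<noteq> j"
  shows "eventually (\<lambda>n. lam j - A n $$ (k, k) \<noteq> 0) sequentially"
proof (rule tendsto_imp_eventually_ne)
  show "(\<lambda>n. lam j - A n $$ (k, k)) \<longlonglongrightarrow> lam j - lam k"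
    by (intro tendsto_intros A_diag_lim assms(1))
  show "lam j - lam k \<noteq> 0"
    using lam_inj[OF assms(2,1)] assms(3) by simp
qed

lemma neighbour_term_bigo:
  assumes "l \<in> neighbours E k" "(\<lambda>n. U n $$ (l, j)) \<in> O(\<lambda>n. t n ^ a)"
  shows "(\<lambda>n. t n ^ f {k, l} * U n $$ (l, j)) \<in> O(\<lambda>n. t n ^ (N0 + a))"
proof -
  have "(\<lambda>n. t n ^ f {k, l}) \<in> O(\<lambda>n. t n ^ N0)"
    using assms(1) f_ge by (intro bigo_power_antimono eventually_abs_t_le_1) (simp add: neighbours_def)
  from landau_o.big.mult[OF this assms(2)] show ?thesis
    by (simp add: power_add)
qed

text \<open>Bootstrapping: after \<open>r\<close> rounds of the eigen-equation, every entry of column \<open>j\<close> has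
  gained a factor \<open>t ^ N0\<close> per edge, for up to \<open>r\<close> edges of its path to \<open>j\<close>.\<close>

lemma column_bigo_min:
  assumes j: "j < m"
  shows "k < m \<Longrightarrow> (\<lambda>n. U n $$ (k, j)) \<in> O(\<lambda>n. t n ^ (N0 * min r (depth k j)))"
proof (induction r arbitrary: k)
  case 0
  then show ?case
    using orthogonal_entry_abs_le_1[OF U_carrier U_orth _ j] by (intro bigoI[of _ 1]) auto
next
  case (Suc r)
  show ?case
  proof (cases "k = j")
    case True
    then show ?thesis
      using orthogonal_entry_abs_le_1[OF U_carrier U_orth j j] depth_eq_0_iff[OF j j]
      by (intro bigoI[of _ 1]) auto
  next
    case False
    let ?e = "N0 * min (Suc r) (depth k j)"
    have "(\<lambda>n. \<Sum>l\<in>neighbours E k. t n ^ f {k, l} * U n $$ (l, j)) \<in> O(\<lambda>n. t n ^ ?e)"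
    proof (rule big_sum_in_bigo)
      fix l
      assume l: "l \<in> neighbours E k"
      then have "l < m" "{k, l} \<in> E"
        using neighbours_subset[OF tree] by (auto simp: neighbours_def)
      then have "min (Suc r) (depth k j) \<le> Suc (min r (depth l j))"
        using depth_neighbour_le[OF Suc.prems j \<open>{k, l} \<in> E\<close>] by (simp add: min_def)
      then have "?e \<le> N0 + N0 * min r (depth l j)"
        by (metis mult_Suc_right mult_le_mono2)
      then show "(\<lambda>n. t n ^ f {k, l} * U n $$ (l, j)) \<in> O(\<lambda>n. t n ^ ?e)"
        by (rule landau_o.big_trans[OF neighbour_term_bigo[OF l Suc.IH[OF \<open>l < m\<close>]]
              bigo_power_antimono[OF eventually_abs_t_le_1]])
    qed
    moreover have "(\<lambda>n. inverse (lam j - A n $$ (k, k))) \<longlonglongrightarrow> inverse (lam j - lam k)"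
      using lam_inj[OF j Suc.prems] False
      by (intro tendsto_inverse tendsto_diff tendsto_const A_diag_lim Suc.prems) auto
    then have "(\<lambda>n. inverse (lam j - A n $$ (k, k))) \<in> O(\<lambda>_. 1)"
      by (intro bigoI_tendsto[where c = "inverse (lam j - lam k)"]) simp_all
    ultimately have bound: "(\<lambda>n. inverse (lam j - A n $$ (k, k)) *
        (\<Sum>l\<in>neighbours E k. t n ^ f {k, l} * U n $$ (l, j))) \<in> O(\<lambda>n. t n ^ ?e)"
      using landau_o.big.mult[of "\<lambda>n. inverse (lam j - A n $$ (k, k))" sequentially "\<lambda>_. 1"] by simp
    have "eventually (\<lambda>n. inverse (lam j - A n $$ (k, k)) *
        (\<Sum>l\<in>neighbours E k. t n ^ f {k, l} * U n $$ (l, j)) = U n $$ (k, j)) sequentially"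
      using eventually_diag_gap_nonzero[OF Suc.prems j False]
      by eventually_elim (simp add: eigen_recursion[OF Suc.prems j, symmetric])
    then show ?thesis
      using bound by (simp add: landau_o.big.in_cong)
  qed
qed

lemma column_bigo:
  assumes "k < m" "j < m"
  shows "(\<lambda>n. U n $$ (k, j)) \<in> O(\<lambda>n. t n ^ (N0 * depth k j))"
  using column_bigo_min[OF assms(2,1), of "diam m E"] depth_le_diam[OF assms] by simp

lemma eventually_t_nonzero: "eventually (\<lambda>n. t n \<noteq> 0) sequentially"
  using t_pos by (simp add: less_imp_neq[symmetric])

lemma offdiag_tendsto_0:
  assumes "k < m" "j < m" "k \<noteq> j"
  shows "(\<lambda>n. U n $$ (k, j)) \<longlonglongrightarrow> 0"
proof -
  have "Suc 0 \<le> N0 * depth k j"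
    using N0_pos[OF assms(2)] depth_eq_0_iff[OF assms(1,2)] assms(3) by simp
  then have "(\<lambda>n. U n $$ (k, j)) \<in> O(\<lambda>n. t n ^ Suc 0)"
    by (rule landau_o.big_trans[OF column_bigo[OF assms(1,2)] bigo_power_antimono[OF eventually_abs_t_le_1]])
  from bigo_power_Suc_divide_tendsto_0[OF t_lim eventually_t_nonzero this] show ?thesis
    by simp
qed

lemma diag_tendsto_1:
  assumes j: "j < m"
  shows "(\<lambda>n. U n $$ (j, j)) \<longlonglongrightarrow> 1"
proof -
  have "(\<lambda>n. \<Sum>k\<in>{..<m} - {j}. (U n $$ (k, j))\<^sup>2) \<longlonglongrightarrow> 0"
    using offdiag_tendsto_0[OF _ j] by (intro tendsto_null_sum) (auto intro: tendsto_power_zero)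
  moreover have "(U n $$ (j, j))\<^sup>2 = 1 - (\<Sum>k\<in>{..<m} - {j}. (U n $$ (k, j))\<^sup>2)" for n
    using orthogonal_column_sum_squares[OF U_carrier U_orth j, of n] j by (simp add: sum.remove)
  ultimately have "(\<lambda>n. (U n $$ (j, j))\<^sup>2) \<longlonglongrightarrow> 1"
    using tendsto_diff[OF tendsto_const[of 1]] by fastforce
  then have "(\<lambda>n. sqrt ((U n $$ (j, j))\<^sup>2)) \<longlonglongrightarrow> sqrt 1"
    by (rule tendsto_real_sqrt)
  then show ?thesis
    using U_diag[OF j] by simp
qed

text \<open>A neighbour \<open>l \<noteq> k\<close> of \<open>i\<close> is one edge further from \<open>j\<close> than \<open>i\<close>, so its term is
  \<open>O(t ^ (N0 * (depth i j + 1)))\<close>, at least one factor \<open>t\<close> smaller than \<open>t ^ weight i j\<close>.\<close>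

lemma off_path_terms_tendsto_0:
  assumes "i < m" "j < m" "k < m" and path: "tree_path E i j = i # tree_path E k j"
  shows "(\<lambda>n. (\<Sum>l\<in>neighbours E i - {k}. t n ^ f {i, l} * U n $$ (l, j)) / t n ^ weight i j)
    \<longlonglongrightarrow> 0"
proof (rule bigo_power_Suc_divide_tendsto_0[OF t_lim eventually_t_nonzero])
  show "(\<lambda>n. \<Sum>l\<in>neighbours E i - {k}. t n ^ f {i, l} * U n $$ (l, j)) \<in> O(\<lambda>n. t n ^ Suc (weight i j))"
  proof (rule big_sum_in_bigo)
    fix l
    assume l: "l \<in> neighbours E i - {k}"
    then have "l < m"
      using neighbours_subset[OF tree] by blast
    have "depth l j = Suc (depth i j)"
      using tree_path_other_neighbour[OF assms(1-3) path] l depth_Cons[OF \<open>l < m\<close> assms(2,1)] by simp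
    then have "Suc (weight i j) \<le> N0 + N0 * depth l j"
      using weight_less_depth[OF assms(1,2)] by simp
    then show "(\<lambda>n. t n ^ f {i, l} * U n $$ (l, j)) \<in> O(\<lambda>n. t n ^ Suc (weight i j))"
      using l by (intro landau_o.big_trans[OF neighbour_term_bigo[OF _ column_bigo[OF \<open>l < m\<close> assms(2)]]
          bigo_power_antimono[OF eventually_abs_t_le_1]]) simp_all
  qed
qed

lemma scaled_entry_tendsto:
  assumes "i < m" "j < m"
  shows "(\<lambda>n. U n $$ (i, j) / t n ^ weight i j) \<longlonglongrightarrow> coeff i j"
  using assms(1)
proof (induction "depth i j" arbitrary: i)
  case 0
  then have "i = j"
    using depth_eq_0_iff[OF _ assms(2)] by simp
  then show ?case
    using diag_tendsto_1[OF assms(2)] tree_path_self[OF tree assms(2)]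
    by (simp add: weight_def coeff_def path_edges_def)
next
  case (Suc d i)
  have "i \<noteq> j"
    using Suc.hyps(2) depth_eq_0_iff[OF Suc.prems assms(2)] by (metis Zero_not_Suc)
  then obtain k where path: "tree_path E i j = i # tree_path E k j" and "{i, k} \<in> E"
    using tree_path_Cons[OF tree Suc.prems assms(2)] by blast
  then have k: "k < m" "k \<in> neighbours E i"
    using tree_edgeD[OF tree] by (auto simp: neighbours_def)
  note cons = depth_Cons[OF Suc.prems assms(2) k(1) path] weight_Cons[OF Suc.prems assms(2) k(1) path]
    coeff_Cons[OF Suc.prems assms(2) k(1) path]
  define R where "R n = (\<Sum>l\<in>neighbours E i - {k}. t n ^ f {i, l} * U n $$ (l, j)) / t n ^ weight i j"
    for n
  have "(\<lambda>n. (U n $$ (k, j) / t n ^ weight k j + R n) / (lam j - A n $$ (i, i)))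
      \<longlonglongrightarrow> (coeff k j + 0) / (lam j - lam i)"
    using Suc.hyps(1)[OF _ k(1)] Suc.hyps(2) cons(1) lam_inj[OF Suc.prems assms(2)] \<open>i \<noteq> j\<close>
      off_path_terms_tendsto_0[OF Suc.prems assms(2) k(1) path]
    by (intro tendsto_intros A_diag_lim Suc.prems) (simp_all add: R_def)
  moreover have "eventually (\<lambda>n. (U n $$ (k, j) / t n ^ weight k j + R n) / (lam j - A n $$ (i, i))
      = U n $$ (i, j) / t n ^ weight i j) sequentially"
    using eventually_diag_gap_nonzero[OF Suc.prems assms(2) \<open>i \<noteq> j\<close>]
  proof eventually_elim
    case (elim n)
    have "(lam j - A n $$ (i, i)) * U n $$ (i, j) =
        t n ^ f {i, k} * U n $$ (k, j) + (\<Sum>l\<in>neighbours E i - {k}. t n ^ f {i, l} * U n $$ (l, j))"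
      using eigen_recursion[OF Suc.prems assms(2)] k(2) finite_subset[OF neighbours_subset[OF tree]]
      by (simp add: sum.remove)
    moreover have "(x / b + s / (a * b)) / d = u / (a * b)"
      if "d * u = a * x + s" "a \<noteq> 0" "b \<noteq> 0" "d \<noteq> 0" for a b d u x s :: real
      using that by (simp add: field_simps)
    ultimately show ?case
      using elim t_pos[of n] by (simp add: R_def cons(2) power_add)
  qed
  ultimately show ?case
    using cons(3) by (simp add: Lim_transform_eventually field_simps)
qed

end

theorem lemma2p3:
  fixes m :: nat and lam :: "nat \<Rightarrow> real" and E :: "nat set set"
    and g :: "nat set \<Rightarrow> nat" and N0 :: nat and f :: "nat set \<Rightarrow> nat"
    and t :: "nat \<Rightarrow> real" and A U :: "nat \<Rightarrow> real mat"
  assumes lam_mono: "\<And>i j. i < j \<Longrightarrow> j < m \<Longrightarrow> lam i < lam j"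
    and tree: "is_tree m E"
    and N0: "N0 > Max (g ` E) * diam m E"
    and f_def: "\<And>e. e \<in> E \<Longrightarrow> f e = N0 + g e"
    and t_pos: "\<And>n. t n > 0"
    and t_lim: "t \<longlonglongrightarrow> 0"
    and A_M: "\<And>n. in_M m E f (t n) (A n)"
    and A_E: "\<And>n. in_E m lam (A n)"
    and A_lim: "\<And>i j. i < m \<Longrightarrow> j < m \<Longrightarrow>
                  (\<lambda>n. A n $$ (i, j)) \<longlonglongrightarrow> diag_Lambda m lam $$ (i, j)"
    and U_carrier: "\<And>n. U n \<in> carrier_mat m m"
    and U_orth: "\<And>n. transpose_mat (U n) * U n = 1\<^sub>m m"
    and U_diag: "\<And>n i. i < m \<Longrightarrow> U n $$ (i, i) \<ge> 0"
    and U_diagonalizes: "\<And>n. transpose_mat (U n) * A n * U n = diag_Lambda m lam"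
  shows "\<forall>i<m. \<forall>j<m.
           (\<lambda>n. U n $$ (i, j) / t n ^ (\<Sum>e\<in>path_edges (tree_path E i j). f e))
           \<longlonglongrightarrow> (\<Prod>k\<in>set (tree_path E i j) - {j}. inverse (lam j - lam k))"
proof -
  interpret tree_eigenvector_asymptotics m lam E f N0 t A U
  proof
    show "lam i \<noteq> lam j" if "i < m" "j < m" "i \<noteq> j" for i j
      using lam_mono that by (metis linorder_neq_iff order_less_irrefl)
    show "N0 \<le> f e" if "e \<in> E" for e
      using f_def[OF that] by simp
    show "(\<Sum>e\<in>path_edges (tree_path E i j). f e) < N0 * length (tree_path E i j)"
      if "i < m" "j < m" for i j
      by (rule tree_path_weight_less[OF tree N0 f_def that])
    show "(\<lambda>n. A n $$ (k, k)) \<longlonglongrightarrow> lam k" if "k < m" for k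
      using A_lim[OF that that] that by (simp add: diag_Lambda_def)
  qed (fact tree t_pos t_lim A_M U_carrier U_orth U_diag U_diagonalizes)+
  show ?thesis
    using scaled_entry_tendsto unfolding weight_def coeff_def by blast
qed

end
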